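(* For any full-rank lattice $\mathcal{L} \subset \mathbb{R}^n$, any $s > n/2$ and $q > 0$, \[ \zeta(\mathcal{L}, s+1; q) \geq \frac{s - n/2}{qs} \cdot \zeta(\mathcal{L}, s; q). \]
   Context: For $q>0$ and $s>n/2$, $\zeta(\mathcal{L}, s; q) := \sum_{\vec{y} \in \mathcal{L}} (\|\vec{y}\|^2 + q)^{-s}$, the sum including $\vec y=\vec 0$. *)

theory Defs
  imports "HOL-Analysis.Analysis"
begin

definition lattice_of :: "real^'n^'n \<Rightarrow> (real^'n) set" where
  "lattice_of B = {B *v (\<chi> i. of_int (k $ i)) | k :: int^'n. True}"

definition full_rank_lattice :: "(real^'n) set \<Rightarrow> bool" where
  "full_rank_lattice L \<longleftrightarrow> (\<exists>B. invertible B \<and> L = lattice_of B)"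

text \<open>Epstein-type zeta function, sum over all lattice points including 0.\<close>
definition lattice_zeta :: "(real^'n) set \<Rightarrow> real \<Rightarrow> real \<Rightarrow> real" where
  "lattice_zeta L s q = (\<Sum>\<^sub>\<infinity>y\<in>L. ((norm y)\<^sup>2 + q) powr (- s))"

end

theory Submission
  imports Defs "HOL-Probability.Distributions"
begin

text \<open>Let \<open>n = DIM('a)\<close>, \<open>\<Theta>(t) = (\<Sum>y\<in>L. exp (- t |y|^2))\<close> and \<open>a = s - n/2\<close>. Integrating the
  Gamma function termwise gives \<open>\<Gamma>(s) \<zeta>(s) = \<integral> t^(s-1) e^(-qt) \<Theta>(t) dt\<close> over \<open>t > 0\<close>.
  The key fact is that \<open>M(t) = t^(n/2) \<Theta>(t)\<close> is nondecreasing: \<open>\<Theta>(t\<^sub>1)\<close> is a Gaussian average of the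
  periodized Gaussian \<open>w \<mapsto> (\<Sum>y\<in>L. exp (- t\<^sub>2 |y + w|^2))\<close>, which is an autocorrelation of an
  \<open>L\<close>-periodic function and hence maximal at \<open>w = 0\<close>, where it equals \<open>\<Theta>(t\<^sub>2)\<close>.
  Finally \<open>a t^(a-1) e^(-qt)\<close> and \<open>q t^a e^(-qt)\<close> have the same integral and their difference
  changes sign only at \<open>t = a/q\<close>, so integrating it against the monotone \<open>M\<close> gives
  \<open>a \<Gamma>(s) \<zeta>(s) \<le> q \<Gamma>(s+1) \<zeta>(s+1) = q s \<Gamma>(s) \<zeta>(s+1)\<close>.
  All integrals and sums are taken in \<open>ennreal\<close>.\<close>

section \<open>Gaussian integrals\<close>

definition gaussian :: "real \<Rightarrow> 'a::real_normed_vector \<Rightarrow> ennreal" where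
  "gaussian a v = ennreal (exp (- a * (norm v)\<^sup>2))"

lemma gaussian_measurable [measurable]: "gaussian a \<in> borel_measurable borel"
  unfolding gaussian_def[abs_def] by measurable

lemma gaussian_minus [simp]: "gaussian a (- v) = gaussian a v"
  by (simp add: gaussian_def)

lemma nn_integral_exp_neg_square:
  "(\<integral>\<^sup>+x. ennreal (exp (- x\<^sup>2)) \<partial>lborel) = ennreal (sqrt pi)"
proof -
  have "has_bochner_integral lborel (\<lambda>x::real. exp (- x\<^sup>2)) (2 *\<^sub>R (sqrt pi / 2))"
    by (rule has_bochner_integral_even_function[OF gaussian_moment_0]) simp
  then show ?thesis
    by (subst nn_integral_eq_integrable) (auto simp: has_bochner_integral_iff)
qed

lemma nn_integral_gaussian_1:
  "(\<integral>\<^sup>+x. gaussian 1 (x::'a::euclidean_space) \<partial>lborel) = ennreal (sqrt pi ^ DIM('a))"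
proof -
  have "(norm x)\<^sup>2 = (\<Sum>b\<in>Basis. (x \<bullet> b)\<^sup>2)" for x :: 'a
    by (simp add: norm_eq_sqrt_inner euclidean_inner[of x x] power2_eq_square sum_nonneg)
  then have "gaussian 1 x = ennreal (\<Prod>b\<in>Basis. exp (- (x \<bullet> b)\<^sup>2))" for x :: 'a
    by (simp add: gaussian_def exp_sum[symmetric] sum_negf)
  then have "(\<integral>\<^sup>+x. gaussian 1 (x::'a) \<partial>lborel)
      = (\<Prod>b\<in>(Basis::'a set). \<integral>\<^sup>+x. ennreal (exp (- x\<^sup>2)) \<partial>lborel)"
    using nn_integral_lborel_prod[of "\<lambda>b x. exp (- x\<^sup>2)"] by (simp add: prod_ennreal)
  then show ?thesis
    by (simp add: nn_integral_exp_neg_square prod_ennreal ennreal_power)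
qed

lemma sqrt_power_eq_powr: "x > 0 \<Longrightarrow> sqrt x ^ n = x powr (n / 2)"
  by (simp add: powr_half_sqrt[symmetric] powr_power)

lemma nn_integral_gaussian:
  fixes c :: "'a::euclidean_space"
  assumes "a > 0"
  shows "(\<integral>\<^sup>+x. gaussian a (x - c) \<partial>lborel) = ennreal ((pi / a) powr (DIM('a) / 2))"
proof -
  define k where "k = sqrt (1 / a)"
  have k: "k > 0" and ak: "a * k\<^sup>2 = 1"
    using assms by (simp_all add: k_def)
  have "(\<integral>\<^sup>+x. gaussian a (x - c) \<partial>lborel)
      = (\<integral>\<^sup>+x. gaussian a (x - c)
          \<partial>density (distr lborel borel (\<lambda>x. c + k *\<^sub>R x)) (\<lambda>_. \<bar>k\<bar> ^ DIM('a)))"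
    using lborel_affine[of k c] k by simp
  also have "\<dots> = (\<integral>\<^sup>+x. ennreal (k ^ DIM('a)) * gaussian a (k *\<^sub>R (x::'a)) \<partial>lborel)"
    using k by (simp add: nn_integral_density nn_integral_distr)
  also have "\<dots> = ennreal (k ^ DIM('a)) * (\<integral>\<^sup>+x. gaussian 1 (x::'a) \<partial>lborel)"
    using k ak by (subst nn_integral_cmult[symmetric])
      (simp_all add: gaussian_def power_mult_distrib mult.assoc[symmetric])
  also have "\<dots> = ennreal ((pi / a) powr (DIM('a) / 2))"
    using k assms
    by (simp add: nn_integral_gaussian_1 ennreal_mult[symmetric] k_def sqrt_power_eq_powr
        powr_mult[symmetric])
  finally show ?thesis .
qed

lemma norm_sq_complete:
  fixes y w :: "'a::real_inner"
  assumes "a + b \<noteq> 0"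
  shows "a * (norm (y - w))\<^sup>2 + b * (norm w)\<^sup>2
       = (a + b) * (norm (w - (a / (a + b)) *\<^sub>R y))\<^sup>2 + a * b / (a + b) * (norm y)\<^sup>2"
proof -
  define c where "c = a / (a + b)"
  have c1: "(a + b) * c = a" and c2: "a * b / (a + b) = b * c"
    using assms by (simp_all add: c_def)
  have "(a + b) * (norm (w - c *\<^sub>R y))\<^sup>2 + b * c * (norm y)\<^sup>2
      = (a + b) * (w \<bullet> w) + ((a + b) * c) * c * (y \<bullet> y) + b * c * (y \<bullet> y) - 2 * ((a + b) * c) * (w \<bullet> y)"
    unfolding power2_norm_eq_inner by (simp add: inner_diff_left inner_diff_right inner_commute algebra_simps)
  also have "\<dots> = (a + b) * (w \<bullet> w) + a * c * (y \<bullet> y) + b * c * (y \<bullet> y) - 2 * a * (w \<bullet> y)"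
    unfolding c1 ..
  also have "\<dots> = (a + b) * (w \<bullet> w) + ((a + b) * c) * (y \<bullet> y) - 2 * a * (w \<bullet> y)"
    by (simp add: algebra_simps)
  also have "\<dots> = a * (norm (y - w))\<^sup>2 + b * (norm w)\<^sup>2"
    unfolding c1 power2_norm_eq_inner by (simp add: inner_diff_left inner_diff_right inner_commute algebra_simps)
  finally show ?thesis
    unfolding c_def[symmetric] c2 by simp
qed

lemma nn_integral_gaussian_convolution:
  fixes y :: "'a::euclidean_space"
  assumes a: "a > 0" and b: "b > 0"
  shows "(\<integral>\<^sup>+w. gaussian a (y - w) * gaussian b w \<partial>lborel)
       = ennreal ((pi / (a + b)) powr (DIM('a) / 2)) * gaussian (a * b / (a + b)) y"
proof -
  have "gaussian a (y - w) * gaussian b w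
      = gaussian (a * b / (a + b)) y * gaussian (a + b) (w - (a / (a + b)) *\<^sub>R y)" for w
    using norm_sq_complete[of a b y w] a b
    by (simp add: gaussian_def ennreal_mult[symmetric] exp_add[symmetric] algebra_simps)
  then show ?thesis
    using a b by (simp add: nn_integral_cmult nn_integral_gaussian mult.commute)
qed

section \<open>Gamma integrals\<close>

definition gamma_kernel :: "real \<Rightarrow> real \<Rightarrow> real \<Rightarrow> real" where
  "gamma_kernel s q t = indicator {0..} t * t powr (s - 1) * exp (- t * q)"

lemma gamma_kernel_measurable [measurable]: "gamma_kernel s q \<in> borel_measurable borel"
  unfolding gamma_kernel_def[abs_def] by measurable

lemma gamma_kernel_nonneg: "gamma_kernel s q t \<ge> 0"
  by (simp add: gamma_kernel_def)

lemma gamma_kernel_succ: "gamma_kernel (s + 1) q t = t * gamma_kernel s q t"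
  by (cases "t \<ge> 0") (simp_all add: gamma_kernel_def powr_mult_base)

lemma gamma_kernel_mult_exp: "gamma_kernel s q t * exp (- (t * c)) = gamma_kernel s (q + c) t"
  by (simp add: gamma_kernel_def mult.assoc exp_add[symmetric] algebra_simps)

lemma gamma_kernel_mult_powr: "gamma_kernel s q t * t powr n = gamma_kernel (s + n) q t"
  by (cases "t > 0") (auto simp: gamma_kernel_def indicator_def algebra_simps simp flip: powr_add)

lemma nn_integral_gamma_kernel:
  assumes q: "q > 0" and s: "s > 0"
  shows "(\<integral>\<^sup>+t. gamma_kernel s q t \<partial>lborel) = ennreal (Gamma s / q powr s)"
proof -
  define f where "f t = indicator {0..} t * t powr (s - 1) / exp t" for t :: real
  have f_nonneg: "f t \<ge> 0" for t
    by (simp add: f_def)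
  have [measurable]: "f \<in> borel_measurable borel"
    unfolding f_def[abs_def] by measurable
  have scale: "q * f (q * t) = q powr s * gamma_kernel s q t" for t
    using q by (cases "t \<ge> 0")
      (auto simp: f_def gamma_kernel_def indicator_def powr_mult exp_minus field_simps powr_diff
        zero_le_mult_iff)
  have "ennreal (Gamma s) = (\<integral>\<^sup>+t. f t \<partial>lborel)"
    unfolding f_def by (rule Gamma_conv_nn_integral_real[OF s])
  also have "\<dots> = ennreal q * (\<integral>\<^sup>+t. f (q * t) \<partial>lborel)"
    using q by (subst nn_integral_real_affine[where c = q and t = 0]) (auto simp: f_def)
  also have "\<dots> = (\<integral>\<^sup>+t. ennreal (q * f (q * t)) \<partial>lborel)"
    using q f_nonneg by (subst nn_integral_cmult[symmetric]) (auto simp: ennreal_mult)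
  also have "\<dots> = (\<integral>\<^sup>+t. ennreal (q powr s) * gamma_kernel s q t \<partial>lborel)"
    by (simp add: scale ennreal_mult gamma_kernel_nonneg)
  also have "\<dots> = ennreal (q powr s) * (\<integral>\<^sup>+t. gamma_kernel s q t \<partial>lborel)"
    by (rule nn_integral_cmult) simp
  finally have "ennreal (Gamma s) / ennreal (q powr s) = (\<integral>\<^sup>+t. gamma_kernel s q t \<partial>lborel)"
    using q by (simp add: ennreal_mult_divide_eq mult.commute[of "ennreal (q powr s)"])
  then show ?thesis
    using q s by (simp add: divide_ennreal Gamma_real_pos less_imp_le)
qed

lemma ennreal_rearrangement:
  fixes x y :: ennreal
  assumes "\<alpha> > 0" "\<beta> > 0"
    and "\<beta> \<le> \<alpha> \<Longrightarrow> y \<le> x" and "\<alpha> \<le> \<beta> \<Longrightarrow> x \<le> y"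
  shows "ennreal \<beta> * x + ennreal \<alpha> * y \<le> ennreal \<alpha> * x + ennreal \<beta> * y"
proof (cases "x = top \<or> y = top")
  case True
  then show ?thesis
    using assms by (auto simp: ennreal_mult_top)
next
  case False
  then obtain x' y' where x: "x = ennreal x'" "x' \<ge> 0" and y: "y = ennreal y'" "y' \<ge> 0"
    by (metis ennreal_cases top.not_eq_extremum)
  have "0 \<le> (\<alpha> - \<beta>) * (x' - y')"
    using assms x y by (cases "\<beta> \<le> \<alpha>") (auto simp: ennreal_le_iff zero_le_mult_iff)
  then have "ennreal (\<beta> * x' + \<alpha> * y') \<le> ennreal (\<alpha> * x' + \<beta> * y')"
    by (intro ennreal_leI) (simp add: algebra_simps)
  then show ?thesis
    using x y assms by (simp add: ennreal_mult[symmetric] ennreal_plus[symmetric] del: ennreal_plus)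
qed

lemma nn_integral_gamma_kernel_eq_top:
  fixes M :: "real \<Rightarrow> ennreal"
  assumes "t\<^sub>0 > 0"
    and mono: "\<And>t t'. 0 < t \<Longrightarrow> t \<le> t' \<Longrightarrow> M t \<le> M t'" and "M t\<^sub>0 = \<infinity>"
  shows "(\<integral>\<^sup>+t. gamma_kernel s q t * M t \<partial>lborel) = \<infinity>"
proof -
  have "\<infinity> * indicator {t\<^sub>0..t\<^sub>0 + 1} t \<le> gamma_kernel s q t * M t" for t
  proof (cases "t \<in> {t\<^sub>0..t\<^sub>0 + 1}")
    case True
    then have "M t = \<infinity>"
      using mono[of t\<^sub>0 t] assms by (auto simp: top_unique)
    moreover have "gamma_kernel s q t > 0"
      using True assms by (simp add: gamma_kernel_def)
    ultimately show ?thesis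
      by (simp add: ennreal_mult_top)
  qed simp
  then have "(\<integral>\<^sup>+t. \<infinity> * indicator {t\<^sub>0..t\<^sub>0 + 1} t \<partial>lborel) \<le> (\<integral>\<^sup>+t. gamma_kernel s q t * M t \<partial>lborel)"
    by (rule nn_integral_mono)
  moreover have "(\<integral>\<^sup>+t. \<infinity> * indicator {t\<^sub>0..t\<^sub>0 + 1} t \<partial>lborel) = \<infinity>"
    by (subst nn_integral_cmult_indicator) (auto simp: ennreal_top_mult)
  ultimately show ?thesis
    by (simp add: top_unique)
qed

text \<open>A Chebyshev-type inequality: \<open>(q t - a) t^(a-1) e^(-qt)\<close> has integral zero and changes sign
  only at \<open>t\<^sub>0 = a / q\<close>, so its product with \<open>M t - M t\<^sub>0\<close> is nonnegative. Since \<open>M\<close> may be infinite,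
  the term \<open>M t\<^sub>0\<close> is added to both sides instead of subtracted.\<close>
lemma nn_integral_gamma_kernel_mono:
  fixes M :: "real \<Rightarrow> ennreal"
  assumes a: "a > 0" and q: "q > 0" and [measurable]: "M \<in> borel_measurable borel"
    and mono: "\<And>t t'. 0 < t \<Longrightarrow> t \<le> t' \<Longrightarrow> M t \<le> M t'"
  shows "ennreal a * (\<integral>\<^sup>+t. gamma_kernel a q t * M t \<partial>lborel)
       \<le> ennreal q * (\<integral>\<^sup>+t. gamma_kernel (a + 1) q t * M t \<partial>lborel)"
proof -
  define t\<^sub>0 where "t\<^sub>0 = a / q"
  have t\<^sub>0: "t\<^sub>0 > 0"
    using a q by (simp add: t\<^sub>0_def)
  define J where "J = (\<integral>\<^sup>+t. gamma_kernel a q t \<partial>lborel)"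
  have mass: "ennreal q * (\<integral>\<^sup>+t. gamma_kernel (a + 1) q t \<partial>lborel) = ennreal a * J"
  proof -
    have "Gamma (a + 1) = a * Gamma a"
      using a by (intro Gamma_plus1) (auto elim!: nonpos_Ints_cases)
    then have "q * (Gamma (a + 1) / q powr (a + 1)) = a * (Gamma a / q powr a)"
      using a q by (simp add: powr_add field_simps)
    then show ?thesis
      using a q by (simp add: J_def nn_integral_gamma_kernel ennreal_mult[symmetric])
  qed
  have pointwise: "ennreal a * (gamma_kernel a q t * M t) + ennreal q * (gamma_kernel (a + 1) q t * M t\<^sub>0)
      \<le> ennreal q * (gamma_kernel (a + 1) q t * M t) + ennreal a * (gamma_kernel a q t * M t\<^sub>0)" for t
  proof (cases "t > 0")
    case True
    have "ennreal a * M t + ennreal (q * t) * M t\<^sub>0 \<le> ennreal (q * t) * M t + ennreal a * M t\<^sub>0"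
      using True a q mono[OF t\<^sub>0, of t] mono[OF True, of t\<^sub>0]
      by (intro ennreal_rearrangement) (auto simp: t\<^sub>0_def field_simps)
    then have "ennreal (gamma_kernel a q t) * (ennreal a * M t + ennreal (q * t) * M t\<^sub>0)
        \<le> ennreal (gamma_kernel a q t) * (ennreal (q * t) * M t + ennreal a * M t\<^sub>0)"
      by (rule mult_left_mono) simp
    then show ?thesis
      using True q by (simp add: gamma_kernel_succ gamma_kernel_nonneg ennreal_mult distrib_left
          mult_ac)
  qed (auto simp: gamma_kernel_def indicator_def)
  have "ennreal a * (\<integral>\<^sup>+t. gamma_kernel a q t * M t \<partial>lborel)
        + M t\<^sub>0 * (ennreal q * (\<integral>\<^sup>+t. gamma_kernel (a + 1) q t \<partial>lborel))
      = (\<integral>\<^sup>+t. ennreal a * (gamma_kernel a q t * M t) + ennreal q * (gamma_kernel (a + 1) q t * M t\<^sub>0) \<partial>lborel)"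
    by (simp add: nn_integral_add nn_integral_cmult nn_integral_multc mult_ac)
  also have "\<dots> \<le> (\<integral>\<^sup>+t. ennreal q * (gamma_kernel (a + 1) q t * M t) + ennreal a * (gamma_kernel a q t * M t\<^sub>0) \<partial>lborel)"
    by (intro nn_integral_mono pointwise)
  also have "\<dots> = ennreal q * (\<integral>\<^sup>+t. gamma_kernel (a + 1) q t * M t \<partial>lborel) + M t\<^sub>0 * (ennreal a * J)"
    by (simp add: J_def nn_integral_add nn_integral_cmult nn_integral_multc mult_ac)
  finally have "ennreal a * (\<integral>\<^sup>+t. gamma_kernel a q t * M t \<partial>lborel) + M t\<^sub>0 * (ennreal a * J)
      \<le> ennreal q * (\<integral>\<^sup>+t. gamma_kernel (a + 1) q t * M t \<partial>lborel) + M t\<^sub>0 * (ennreal a * J)"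
    unfolding mass .
  moreover have "M t\<^sub>0 * (ennreal a * J) \<noteq> \<infinity>" if "M t\<^sub>0 \<noteq> \<infinity>"
    using that a q by (simp add: J_def nn_integral_gamma_kernel ennreal_mult_eq_top_iff)
  ultimately show ?thesis
    using nn_integral_gamma_kernel_eq_top[OF t\<^sub>0 mono] q
    by (cases "M t\<^sub>0 = \<infinity>") (auto simp: ennreal_mult_top ennreal_add_left_cancel_le)
qed

section \<open>Fundamental domains\<close>

lemma borel_measurable_nn_integral_count_space:
  fixes f :: "'i \<Rightarrow> 'b \<Rightarrow> ennreal"
  assumes "countable I" and meas: "\<And>i. i \<in> I \<Longrightarrow> f i \<in> borel_measurable M"
  shows "(\<lambda>x. \<integral>\<^sup>+i. f i x \<partial>count_space I) \<in> borel_measurable M"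
proof cases
  assume "finite I"
  then show ?thesis
    using meas by (simp add: nn_integral_count_space_finite)
next
  assume "infinite I"
  then have "I \<noteq> {}"
    by auto
  have "(\<lambda>x. \<integral>\<^sup>+i. f i x \<partial>count_space I) = (\<lambda>x. \<Sum>n. f (from_nat_into I n) x)"
    using bij_betw_from_nat_into[OF \<open>countable I\<close> \<open>infinite I\<close>]
    by (simp add: nn_integral_bij_count_space[symmetric] nn_integral_count_space_nat)
  moreover have "f (from_nat_into I n) \<in> borel_measurable M" for n
    using meas from_nat_into[OF \<open>I \<noteq> {}\<close>] by blast
  ultimately show ?thesis
    by (simp add: borel_measurable_suminf_order)
qed

lemma nn_integral_lborel_translate:
  fixes g :: "'a::euclidean_space \<Rightarrow> ennreal"
  assumes [measurable]: "g \<in> borel_measurable borel"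
  shows "(\<integral>\<^sup>+x. g x \<partial>lborel) = (\<integral>\<^sup>+x. g (x + c) \<partial>lborel)"
  by (subst lborel_distr_plus[symmetric, of c]) (simp add: nn_integral_distr add.commute)

lemma ennreal_two_mult_le_sum_squares: "2 * (x * y) \<le> x\<^sup>2 + (y::ennreal)\<^sup>2"
proof (cases x; cases y)
  fix x' y' :: real
  assume xy: "x = ennreal x'" "0 \<le> x'" "y = ennreal y'" "0 \<le> y'"
  have "ennreal (2 * (x' * y')) \<le> ennreal (x'\<^sup>2 + y'\<^sup>2)"
    using sum_squares_bound[of x' y'] by (intro ennreal_leI) simp
  then show ?thesis
    using xy by (simp add: ennreal_mult ennreal_power ennreal_plus[symmetric] del: ennreal_plus)
qed (auto simp: ennreal_mult_top ennreal_top_mult power2_eq_square)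

locale fundamental_domain =
  fixes L :: "'a::euclidean_space set" and D :: "'a set"
  assumes countable_L: "countable L"
    and add_mem: "y \<in> L \<Longrightarrow> z \<in> L \<Longrightarrow> y + z \<in> L"
    and uminus_mem: "y \<in> L \<Longrightarrow> - y \<in> L"
    and sets_D [measurable]: "D \<in> sets borel"
    and tiling: "\<exists>!z. z \<in> L \<and> x - z \<in> D"
begin

lemma diff_mem: "y \<in> L \<Longrightarrow> z \<in> L \<Longrightarrow> y - z \<in> L"
  using add_mem[of y "- z"] uminus_mem[of z] by simp

lemma nn_integral_count_space_translate:
  assumes "c \<in> L"
  shows "(\<integral>\<^sup>+z. f (c + z) \<partial>count_space L) = (\<integral>\<^sup>+z. f z \<partial>count_space L)"
proof -
  have "bij_betw (\<lambda>z. c + z) L L"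
    by (rule bij_betwI[where g = "\<lambda>z. z - c"]) (use assms add_mem diff_mem in auto)
  then show ?thesis
    by (rule nn_integral_bij_count_space)
qed

lemma nn_integral_count_space_uminus:
  "(\<integral>\<^sup>+z. f (- z) \<partial>count_space L) = (\<integral>\<^sup>+z. f z \<partial>count_space L)"
proof -
  have "bij_betw uminus L L"
    by (rule bij_betwI[where g = uminus]) (auto simp: uminus_mem)
  then show ?thesis
    by (rule nn_integral_bij_count_space)
qed

lemma nn_integral_indicator_translates: "(\<integral>\<^sup>+z. indicator D (x - z) \<partial>count_space L) = 1"
proof -
  have "\<exists>z\<in>L. x - z \<in> D"
    using tiling by blast
  moreover have "of_bool (\<exists>z\<in>L. x - z \<in> D) = (\<integral>\<^sup>+z. of_bool (x - z \<in> D) \<partial>count_space L)"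
    by (rule of_bool_Bex_eq_nn_integral) (use tiling in blast)
  ultimately show ?thesis
    by (simp add: indicator_def)
qed

lemma nn_integral_unfold:
  assumes [measurable]: "h \<in> borel_measurable borel"
  shows "(\<integral>\<^sup>+x. h x \<partial>lborel) = (\<integral>\<^sup>+u. indicator D u * (\<integral>\<^sup>+z. h (u + z) \<partial>count_space L) \<partial>lborel)"
proof -
  have "(\<integral>\<^sup>+x. h x \<partial>lborel) = (\<integral>\<^sup>+x. (\<integral>\<^sup>+z. indicator D (x - z) * h x \<partial>count_space L) \<partial>lborel)"
    by (simp add: nn_integral_multc nn_integral_indicator_translates)
  also have "\<dots> = (\<integral>\<^sup>+z. (\<integral>\<^sup>+x. indicator D (x - z) * h x \<partial>lborel) \<partial>count_space L)"
    by (rule nn_integral_count_space_nn_integral[OF countable_L]) measurable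
  also have "\<dots> = (\<integral>\<^sup>+z. (\<integral>\<^sup>+u. indicator D u * h (u + z) \<partial>lborel) \<partial>count_space L)"
  proof (rule nn_integral_cong)
    fix z
    show "(\<integral>\<^sup>+x. indicator D (x - z) * h x \<partial>lborel) = (\<integral>\<^sup>+u. indicator D u * h (u + z) \<partial>lborel)"
      by (subst nn_integral_lborel_translate[where c = z]) auto
  qed
  also have "\<dots> = (\<integral>\<^sup>+u. (\<integral>\<^sup>+z. indicator D u * h (u + z) \<partial>count_space L) \<partial>lborel)"
    by (rule nn_integral_count_space_nn_integral[OF countable_L, symmetric]) measurable
  finally show ?thesis
    by (simp add: nn_integral_cmult)
qed

lemma nn_integral_unfold_periodic:
  assumes [measurable]: "g \<in> borel_measurable borel" "f \<in> borel_measurable borel"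
    and periodic: "\<And>u z. z \<in> L \<Longrightarrow> f (u + z) = f u"
  shows "(\<integral>\<^sup>+u. g u * f u \<partial>lborel)
       = (\<integral>\<^sup>+u. indicator D u * ((\<integral>\<^sup>+z. g (u + z) \<partial>count_space L) * f u) \<partial>lborel)"
proof -
  have "(\<integral>\<^sup>+z. g (u + z) * f (u + z) \<partial>count_space L) = (\<integral>\<^sup>+z. g (u + z) \<partial>count_space L) * f u" for u
    by (subst nn_integral_multc[symmetric]) (auto intro!: nn_integral_cong simp: periodic)
  then show ?thesis
    by (subst nn_integral_unfold) simp_all
qed

lemma nn_integral_domain_translate:
  assumes [measurable]: "f \<in> borel_measurable borel"
    and periodic: "\<And>u z. z \<in> L \<Longrightarrow> f (u + z) = f u"
  shows "(\<integral>\<^sup>+u. indicator D u * f (u + w) \<partial>lborel) = (\<integral>\<^sup>+u. indicator D u * f u \<partial>lborel)"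
proof -
  have "(\<integral>\<^sup>+u. indicator D u * f (u + w) \<partial>lborel) = (\<integral>\<^sup>+x. indicator D (x - w) * f x \<partial>lborel)"
    by (subst nn_integral_lborel_translate[where c = w]) auto
  also have "\<dots> = (\<integral>\<^sup>+u. indicator D u * ((\<integral>\<^sup>+z. indicator D (u + z - w) \<partial>count_space L) * f u) \<partial>lborel)"
    by (subst nn_integral_unfold_periodic) (auto simp: periodic)
  also have "\<dots> = (\<integral>\<^sup>+u. indicator D u * f u \<partial>lborel)"
  proof -
    have "(\<integral>\<^sup>+z. indicator D (u + z - w) \<partial>count_space L) = 1" for u
      using nn_integral_count_space_uminus[of "\<lambda>z. indicator D (u + z - w)"]
        nn_integral_indicator_translates[of "u - w"]
      by (simp add: algebra_simps)
    then show ?thesis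
      by simp
  qed
  finally show ?thesis .
qed

lemma nn_integral_domain_correlation_le:
  assumes [measurable]: "f \<in> borel_measurable borel"
    and periodic: "\<And>u z. z \<in> L \<Longrightarrow> f (u + z) = f u"
  shows "(\<integral>\<^sup>+u. indicator D u * (f u * f (u + w)) \<partial>lborel) \<le> (\<integral>\<^sup>+u. indicator D u * (f u * f u) \<partial>lborel)"
proof -
  have "2 * (\<integral>\<^sup>+u. indicator D u * (f u * f (u + w)) \<partial>lborel)
      = (\<integral>\<^sup>+u. indicator D u * (2 * (f u * f (u + w))) \<partial>lborel)"
    by (subst nn_integral_cmult[symmetric]) (auto simp: mult_ac)
  also have "\<dots> \<le> (\<integral>\<^sup>+u. indicator D u * ((f u)\<^sup>2 + (f (u + w))\<^sup>2) \<partial>lborel)"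
    by (intro nn_integral_mono mult_left_mono ennreal_two_mult_le_sum_squares) simp
  also have "\<dots> = (\<integral>\<^sup>+u. indicator D u * (f u * f u) \<partial>lborel)
      + (\<integral>\<^sup>+u. indicator D u * (f (u + w) * f (u + w)) \<partial>lborel)"
    by (subst nn_integral_add[symmetric]) (auto simp: distrib_left power2_eq_square)
  also have "\<dots> = 2 * (\<integral>\<^sup>+u. indicator D u * (f u * f u) \<partial>lborel)"
    using nn_integral_domain_translate[of "\<lambda>u. f u * f u" w] by (simp add: periodic mult_2)
  finally show ?thesis
    by (subst (asm) ennreal_mult_le_mult_iff) auto
qed

section \<open>The periodized Gaussian\<close>

definition periodic_gaussian :: "real \<Rightarrow> 'a \<Rightarrow> ennreal" where
  "periodic_gaussian a u = (\<integral>\<^sup>+z. gaussian a (u + z) \<partial>count_space L)"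

lemma periodic_gaussian_measurable [measurable]: "periodic_gaussian a \<in> borel_measurable borel"
  unfolding periodic_gaussian_def[abs_def]
  by (rule borel_measurable_nn_integral_count_space[OF countable_L]) measurable

lemma periodic_gaussian_periodic: "z \<in> L \<Longrightarrow> periodic_gaussian a (u + z) = periodic_gaussian a u"
  unfolding periodic_gaussian_def
  using nn_integral_count_space_translate[of z "\<lambda>y. gaussian a (u + y)"] by (simp add: add.assoc)

lemma periodic_gaussian_autocorrelation:
  assumes a: "a > 0"
  shows "ennreal ((pi / (4 * a)) powr (DIM('a) / 2)) * periodic_gaussian a w
       = (\<integral>\<^sup>+u. indicator D u * (periodic_gaussian (2 * a) u * periodic_gaussian (2 * a) (u - w)) \<partial>lborel)"
proof -
  let ?c = "ennreal ((pi / (4 * a)) powr (DIM('a) / 2))"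
  have conv: "?c * gaussian a v = (\<integral>\<^sup>+u. gaussian (2 * a) (v - u) * gaussian (2 * a) u \<partial>lborel)" for v :: 'a
    using nn_integral_gaussian_convolution[of "2 * a" "2 * a" v] a by simp
  have reflect: "(\<integral>\<^sup>+y. gaussian (2 * a) (w + y - u) \<partial>count_space L) = periodic_gaussian (2 * a) (u - w)" for u
  proof -
    have "gaussian (2 * a) (w + y - u) = gaussian (2 * a) (u - w + - y)" for y
      using gaussian_minus[of "2 * a" "w + y - u"] by (simp add: diff_diff_eq)
    then have "(\<integral>\<^sup>+y. gaussian (2 * a) (w + y - u) \<partial>count_space L)
        = (\<integral>\<^sup>+y. gaussian (2 * a) (u - w + - y) \<partial>count_space L)"
      by simp
    also have "\<dots> = periodic_gaussian (2 * a) (u - w)"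
      unfolding periodic_gaussian_def by (rule nn_integral_count_space_uminus)
    finally show ?thesis .
  qed
  have "?c * periodic_gaussian a w = (\<integral>\<^sup>+y. ?c * gaussian a (w + y) \<partial>count_space L)"
    unfolding periodic_gaussian_def by (rule nn_integral_cmult[symmetric]) simp
  also have "\<dots> = (\<integral>\<^sup>+y. (\<integral>\<^sup>+u. gaussian (2 * a) (w + y - u) * gaussian (2 * a) u \<partial>lborel) \<partial>count_space L)"
    by (simp add: conv)
  also have "\<dots> = (\<integral>\<^sup>+u. (\<integral>\<^sup>+y. gaussian (2 * a) (w + y - u) \<partial>count_space L) * gaussian (2 * a) u \<partial>lborel)"
    by (subst nn_integral_count_space_nn_integral[OF countable_L, symmetric]) (simp_all add: nn_integral_multc)
  also have "\<dots> = (\<integral>\<^sup>+u. gaussian (2 * a) u * periodic_gaussian (2 * a) (u - w) \<partial>lborel)"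
    unfolding reflect by (simp add: mult.commute)
  also have "\<dots> = (\<integral>\<^sup>+u. indicator D u * (periodic_gaussian (2 * a) u * periodic_gaussian (2 * a) (u - w)) \<partial>lborel)"
    by (subst nn_integral_unfold_periodic)
      (simp_all add: periodic_gaussian_def[symmetric] diff_add_eq[symmetric] periodic_gaussian_periodic)
  finally show ?thesis .
qed

lemma periodic_gaussian_le_zero:
  assumes a: "a > 0"
  shows "periodic_gaussian a w \<le> periodic_gaussian a 0"
proof -
  let ?c = "ennreal ((pi / (4 * a)) powr (DIM('a) / 2))"
  have "?c * periodic_gaussian a w \<le> ?c * periodic_gaussian a 0"
    using nn_integral_domain_correlation_le[of "periodic_gaussian (2 * a)" "- w"]
    by (simp add: periodic_gaussian_autocorrelation[OF a] periodic_gaussian_periodic)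
  moreover have "?c \<noteq> 0" "?c \<noteq> \<infinity>"
    using a by auto
  ultimately show ?thesis
    by (simp add: ennreal_mult_le_mult_iff)
qed

lemma periodic_gaussian_convolution:
  assumes a: "a > 0" and b: "b > 0"
  shows "ennreal ((pi / (a + b)) powr (DIM('a) / 2)) * periodic_gaussian (a * b / (a + b)) 0
       = (\<integral>\<^sup>+w. periodic_gaussian a (- w) * gaussian b w \<partial>lborel)"
proof -
  have "ennreal ((pi / (a + b)) powr (DIM('a) / 2)) * periodic_gaussian (a * b / (a + b)) 0
      = (\<integral>\<^sup>+y. (\<integral>\<^sup>+w. gaussian a (y - w) * gaussian b w \<partial>lborel) \<partial>count_space L)"
    unfolding periodic_gaussian_def
    by (subst nn_integral_cmult[symmetric]) (simp_all add: nn_integral_gaussian_convolution a b)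
  also have "\<dots> = (\<integral>\<^sup>+w. (\<integral>\<^sup>+y. gaussian a (- w + y) \<partial>count_space L) * gaussian b w \<partial>lborel)"
    by (subst nn_integral_count_space_nn_integral[OF countable_L, symmetric]) (simp_all add: nn_integral_multc)
  finally show ?thesis
    by (simp add: periodic_gaussian_def)
qed

lemma powr_mult_periodic_gaussian_zero_mono:
  assumes t\<^sub>1: "0 < t\<^sub>1" and t\<^sub>1\<^sub>2: "t\<^sub>1 \<le> t\<^sub>2"
  shows "ennreal (t\<^sub>1 powr (DIM('a) / 2)) * periodic_gaussian t\<^sub>1 0 \<le> ennreal (t\<^sub>2 powr (DIM('a) / 2)) * periodic_gaussian t\<^sub>2 0"
proof (cases "t\<^sub>1 = t\<^sub>2")
  case False
  then have "t\<^sub>1 < t\<^sub>2"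
    using t\<^sub>1\<^sub>2 by simp
  txt \<open>\<open>b\<close> is chosen so that the Gaussians with parameters \<open>t\<^sub>2\<close> and \<open>b\<close> convolve to the one with
    parameter \<open>t\<^sub>1\<close>.\<close>
  define b where "b = t\<^sub>1 * t\<^sub>2 / (t\<^sub>2 - t\<^sub>1)"
  define n where "n = real DIM('a) / 2"
  have b: "b > 0" and t\<^sub>2: "t\<^sub>2 > 0"
    using t\<^sub>1 \<open>t\<^sub>1 < t\<^sub>2\<close> by (simp_all add: b_def)
  have t\<^sub>2b: "t\<^sub>2 * b / (t\<^sub>2 + b) = t\<^sub>1"
    using t\<^sub>1 \<open>t\<^sub>1 < t\<^sub>2\<close> by (simp add: b_def field_simps)
  have "ennreal ((pi / (t\<^sub>2 + b)) powr n) * periodic_gaussian t\<^sub>1 0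
      = (\<integral>\<^sup>+w. periodic_gaussian t\<^sub>2 (- w) * gaussian b w \<partial>lborel)"
    using periodic_gaussian_convolution[OF t\<^sub>2 b] by (simp add: t\<^sub>2b n_def)
  also have "\<dots> \<le> (\<integral>\<^sup>+w. periodic_gaussian t\<^sub>2 0 * gaussian b (w::'a) \<partial>lborel)"
    by (rule nn_integral_mono) (simp add: mult_right_mono periodic_gaussian_le_zero t\<^sub>2)
  also have "\<dots> = periodic_gaussian t\<^sub>2 0 * ennreal ((pi / b) powr n)"
    using nn_integral_gaussian[OF b, of "0::'a"] by (simp add: nn_integral_cmult n_def)
  finally have "ennreal ((t\<^sub>2 * b / pi) powr n) * (ennreal ((pi / (t\<^sub>2 + b)) powr n) * periodic_gaussian t\<^sub>1 0)
      \<le> ennreal ((t\<^sub>2 * b / pi) powr n) * (periodic_gaussian t\<^sub>2 0 * ennreal ((pi / b) powr n))"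
    by (rule mult_left_mono) simp
  then show ?thesis
    using b t\<^sub>2
    by (simp add: mult_ac ennreal_mult[symmetric] powr_mult[symmetric] n_def
        t\<^sub>2b[unfolded mult.commute[of t\<^sub>2 b]])
qed simp

end

section \<open>The lattice zeta function\<close>

definition lattice_zeta_ennreal :: "'a::real_normed_vector set \<Rightarrow> real \<Rightarrow> real \<Rightarrow> ennreal" where
  "lattice_zeta_ennreal L s q = (\<integral>\<^sup>+y. ennreal (((norm y)\<^sup>2 + q) powr (- s)) \<partial>count_space L)"

lemma lattice_zeta_ennreal_succ_le:
  assumes q: "q > 0"
  shows "lattice_zeta_ennreal L (s + 1) q \<le> ennreal (1 / q) * lattice_zeta_ennreal L s q"
proof -
  have "((norm y)\<^sup>2 + q) powr (- (s + 1)) \<le> 1 / q * ((norm y)\<^sup>2 + q) powr (- s)" for y :: 'a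
  proof -
    have pos: "(norm y)\<^sup>2 + q > 0"
      using q by (simp add: add_nonneg_pos)
    then have "((norm y)\<^sup>2 + q) powr (- (s + 1)) = ((norm y)\<^sup>2 + q) powr (- s) / ((norm y)\<^sup>2 + q)"
      by (simp add: powr_diff)
    also have "\<dots> \<le> ((norm y)\<^sup>2 + q) powr (- s) / q"
      using pos q by (intro divide_left_mono mult_pos_pos) simp_all
    finally show ?thesis
      by simp
  qed
  then show ?thesis
    unfolding lattice_zeta_ennreal_def using q
    by (subst nn_integral_cmult[symmetric])
      (auto intro!: nn_integral_mono simp: ennreal_mult[symmetric] ennreal_leI)
qed

lemma infsum_eq_enn2real_nn_integral:
  fixes f :: "'a \<Rightarrow> real"
  assumes nonneg: "\<And>x. x \<in> A \<Longrightarrow> f x \<ge> 0"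
  shows "infsum f A = enn2real (\<integral>\<^sup>+x. ennreal (f x) \<partial>count_space A)"
proof (cases "f summable_on A")
  case True
  then have "Infinite_Set_Sum.abs_summable_on f A"
    using summable_on_iff_abs_summable_on_real abs_summable_equivalent by blast
  then show ?thesis
    using nonneg by (simp add: nn_integral_conv_infsetsum infsetsum_infsum infsum_nonneg)
next
  case False
  then have "\<not> Infinite_Set_Sum.abs_summable_on f A"
    using summable_on_iff_abs_summable_on_real abs_summable_equivalent by blast
  moreover have "(\<integral>\<^sup>+x. ennreal (norm (f x)) \<partial>count_space A) = (\<integral>\<^sup>+x. ennreal (f x) \<partial>count_space A)"
    by (rule nn_integral_cong) (simp add: nonneg)
  ultimately have "(\<integral>\<^sup>+x. ennreal (f x) \<partial>count_space A) = \<infinity>"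
    by (simp add: Infinite_Set_Sum.abs_summable_on_def integrable_iff_bounded less_top[symmetric])
  then show ?thesis
    using False by (simp add: infsum_not_exists)
qed

text \<open>No summability hypothesis is needed: on divergence both sides are \<open>0\<close>, as \<open>infsum\<close> returns
  \<open>0\<close> and \<open>enn2real \<infinity> = 0\<close>.\<close>
lemma lattice_zeta_eq_enn2real: "lattice_zeta L s q = enn2real (lattice_zeta_ennreal L s q)"
  unfolding lattice_zeta_def lattice_zeta_ennreal_def by (rule infsum_eq_enn2real_nn_integral) simp

context fundamental_domain
begin

lemma nn_integral_gamma_kernel_periodic_gaussian:
  assumes q: "q > 0" and s: "s > 0"
  shows "(\<integral>\<^sup>+t. gamma_kernel s q t * periodic_gaussian t 0 \<partial>lborel) = ennreal (Gamma s) * lattice_zeta_ennreal L s q"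
proof -
  have "(\<integral>\<^sup>+t. gamma_kernel s q t * periodic_gaussian t 0 \<partial>lborel)
      = (\<integral>\<^sup>+t. (\<integral>\<^sup>+y. gamma_kernel s ((norm y)\<^sup>2 + q) t \<partial>count_space L) \<partial>lborel)"
    unfolding periodic_gaussian_def
    by (subst nn_integral_cmult[symmetric])
      (simp_all add: gaussian_def ennreal_mult[symmetric] gamma_kernel_nonneg gamma_kernel_mult_exp
        add.commute)
  also have "\<dots> = (\<integral>\<^sup>+y. (\<integral>\<^sup>+t. gamma_kernel s ((norm y)\<^sup>2 + q) t \<partial>lborel) \<partial>count_space L)"
    by (rule nn_integral_count_space_nn_integral[OF countable_L]) simp
  also have "\<dots> = (\<integral>\<^sup>+y. ennreal (Gamma s) * ennreal (((norm y)\<^sup>2 + q) powr (- s)) \<partial>count_space L)"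
  proof (rule nn_integral_cong)
    fix y :: 'a
    have "(norm y)\<^sup>2 + q > 0"
      using q by (simp add: add_nonneg_pos)
    then show "(\<integral>\<^sup>+t. gamma_kernel s ((norm y)\<^sup>2 + q) t \<partial>lborel)
        = ennreal (Gamma s) * ennreal (((norm y)\<^sup>2 + q) powr (- s))"
      using s by (simp add: nn_integral_gamma_kernel ennreal_mult[symmetric] powr_minus divide_inverse
          less_imp_le)
  qed
  also have "\<dots> = ennreal (Gamma s) * lattice_zeta_ennreal L s q"
    unfolding lattice_zeta_ennreal_def by (rule nn_integral_cmult) simp
  finally show ?thesis .
qed

lemma lattice_zeta_ennreal_succ_ge:
  assumes q: "q > 0" and s: "s > DIM('a) / 2"
  shows "ennreal (s - DIM('a) / 2) * lattice_zeta_ennreal L s q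
       \<le> ennreal (q * s) * lattice_zeta_ennreal L (s + 1) q"
proof -
  define n where "n = real DIM('a) / 2"
  define M where "M t = ennreal (t powr n) * periodic_gaussian t 0" for t
  have a: "s - n > 0" and s_pos: "s > 0"
    using s by (simp_all add: n_def less_le_trans[of 0 "real DIM('a) / 2" s])
  have [measurable]: "(\<lambda>t. periodic_gaussian t 0) \<in> borel_measurable borel"
    unfolding periodic_gaussian_def gaussian_def
    by (rule borel_measurable_nn_integral_count_space[OF countable_L]) measurable
  have M_measurable: "M \<in> borel_measurable borel"
    unfolding M_def[abs_def] by measurable
  have M_mono: "M t \<le> M t'" if "0 < t" "t \<le> t'" for t t'
    unfolding M_def n_def using that by (rule powr_mult_periodic_gaussian_zero_mono)
  have weight: "gamma_kernel (s - n) q t * M t = gamma_kernel s q t * periodic_gaussian t 0" for t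
    using gamma_kernel_mult_powr[of "s - n" q t n]
    by (simp add: M_def mult.assoc[symmetric] ennreal_mult'[symmetric] gamma_kernel_nonneg)
  have weight_succ: "gamma_kernel (s - n + 1) q t * M t = gamma_kernel (s + 1) q t * periodic_gaussian t 0" for t
    by (cases "t \<ge> 0")
      (simp_all add: gamma_kernel_succ ennreal_mult gamma_kernel_nonneg mult.assoc weight,
        simp add: gamma_kernel_def)
  have Gamma_succ: "Gamma (s + 1) = s * Gamma s"
    using s_pos by (intro Gamma_plus1) (auto elim!: nonpos_Ints_cases)
  have "ennreal (s - n) * (ennreal (Gamma s) * lattice_zeta_ennreal L s q)
      \<le> ennreal q * (ennreal (s * Gamma s) * lattice_zeta_ennreal L (s + 1) q)"
    using nn_integral_gamma_kernel_mono[OF a q M_measurable M_mono] s_pos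
    unfolding weight weight_succ
    by (simp add: nn_integral_gamma_kernel_periodic_gaussian q Gamma_succ)
  then have "ennreal (Gamma s) * (ennreal (s - n) * lattice_zeta_ennreal L s q)
      \<le> ennreal (Gamma s) * (ennreal (q * s) * lattice_zeta_ennreal L (s + 1) q)"
    using q s_pos by (simp add: ennreal_mult mult_ac)
  then show ?thesis
    using Gamma_real_pos[OF s_pos] by (simp add: ennreal_mult_le_mult_iff n_def)
qed

end

section \<open>Full-rank lattices\<close>

lemma lattice_of_eq_range: "lattice_of B = range (\<lambda>k. B *v (\<chi> i. of_int (k $ i)))"
  unfolding lattice_of_def by auto

lemma fundamental_domain_lattice_of:
  fixes B B' :: "real^'n^'n"
  assumes inv: "B' ** B = mat 1"
  shows "fundamental_domain (lattice_of B) {x. \<forall>i. (B' *v x) $ i \<in> {0..<1}}"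
proof
  define iv :: "int^'n \<Rightarrow> real^'n" where "iv k = (\<chi> i. of_int (k $ i))" for k
  have L: "lattice_of B = range (\<lambda>k. B *v iv k)"
    unfolding iv_def by (rule lattice_of_eq_range)
  show "countable (lattice_of B)"
    unfolding L by simp
  show "y + z \<in> lattice_of B" if y: "y \<in> lattice_of B" and z: "z \<in> lattice_of B" for y z
  proof -
    obtain k\<^sub>1 k\<^sub>2 where "y = B *v iv k\<^sub>1" "z = B *v iv k\<^sub>2"
      using y z unfolding L by blast
    moreover have "iv (k\<^sub>1 + k\<^sub>2) = iv k\<^sub>1 + iv k\<^sub>2"
      by (simp add: iv_def vec_eq_iff)
    ultimately have "y + z = B *v iv (k\<^sub>1 + k\<^sub>2)"
      by (simp add: matrix_vector_right_distrib)
    then show ?thesis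
      unfolding L by blast
  qed
  show "- y \<in> lattice_of B" if y: "y \<in> lattice_of B" for y
  proof -
    obtain k where "y = B *v iv k"
      using y unfolding L by blast
    moreover have "iv (- k) = - iv k"
      by (simp add: iv_def vec_eq_iff)
    ultimately have "- y = B *v iv (- k)"
      by (simp add: linear_neg[OF matrix_vector_mul_linear])
    then show ?thesis
      unfolding L by blast
  qed
  have [measurable]: "(\<lambda>x. (B' *v x) $ i) \<in> borel_measurable borel" for i
    by (intro borel_measurable_continuous_onI linear_continuous_on bounded_linear_compose[OF
          bounded_linear_vec_nth matrix_vector_mul_bounded_linear])
  show "{x. \<forall>i. (B' *v x) $ i \<in> {0..<1}} \<in> sets borel"
    by measurable
  show "\<exists>!z. z \<in> lattice_of B \<and> x - z \<in> {x. \<forall>i. (B' *v x) $ i \<in> {0..<1}}" for x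
  proof -
    have left_inverse: "B' *v (B *v v) = v" for v
      using inv by (simp add: matrix_vector_mul_assoc)
    have coords: "B' *v (x - B *v iv k) = (\<chi> i. (B' *v x) $ i - of_int (k $ i))" for k
      by (simp add: matrix_vector_mult_diff_distrib left_inverse iv_def vec_eq_iff)
    have "x - B *v iv k \<in> {x. \<forall>i. (B' *v x) $ i \<in> {0..<1}} \<longleftrightarrow> (\<chi> i. \<lfloor>(B' *v x) $ i\<rfloor>) = k" for k
      by (auto simp: coords vec_eq_iff floor_eq_iff diff_less_eq add.commute)
    then show ?thesis
      unfolding L by auto
  qed
qed

lemma lattice_zeta_succ_ge_of_ennreal:
  fixes L :: "(real^'n) set"
  assumes q: "q > 0" and s: "s > 0" and c: "c \<ge> 0"
    and le: "ennreal c * lattice_zeta_ennreal L s q \<le> ennreal (q * s) * lattice_zeta_ennreal L (s + 1) q"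
  shows "c / (q * s) * lattice_zeta L s q \<le> lattice_zeta L (s + 1) q"
proof (cases "lattice_zeta_ennreal L s q = \<infinity>")
  case True
  then show ?thesis
    by (simp add: lattice_zeta_eq_enn2real)
next
  case False
  then have "lattice_zeta_ennreal L (s + 1) q < \<infinity>"
    using lattice_zeta_ennreal_succ_le[OF q, of L s] by (simp add: ennreal_mult_less_top le_less_trans less_top)
  then have "c * lattice_zeta L s q \<le> (q * s) * lattice_zeta L (s + 1) q"
    using enn2real_mono[OF le] q s c by (simp add: lattice_zeta_eq_enn2real enn2real_mult ennreal_mult_less_top)
  then show ?thesis
    using q s by (simp add: divide_le_eq mult.commute)
qed

theorem corollary3p2:
  fixes L :: "(real^'n) set" and s q :: real
  assumes "full_rank_lattice L"
    and "s > real CARD('n) / 2"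
    and "q > 0"
  shows "lattice_zeta L (s + 1) q \<ge> (s - real CARD('n) / 2) / (q * s) * lattice_zeta L s q"
proof -
  obtain B B' :: "real^'n^'n" where "L = lattice_of B" and "B' ** B = mat 1"
    using assms(1) unfolding full_rank_lattice_def invertible_def by blast
  then interpret fundamental_domain L "{x. \<forall>i. (B' *v x) $ i \<in> {0..<1}}"
    using fundamental_domain_lattice_of by blast
  have "s > 0"
    using assms(2) by (simp add: less_le_trans[of 0 "real CARD('n) / 2" s])
  then show ?thesis
    using lattice_zeta_ennreal_succ_ge[OF assms(3)] assms(2,3)
    by (intro lattice_zeta_succ_ge_of_ennreal) simp_all
qed

end
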